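(* For every connected graph $G$ with no isolated vertices, $$\gamma_t(G) \le \left\lceil \frac{2(\gamma(G)+\gamma_c(G))}{3}\right\rceil.$$ Moreover, this bound is tight.
   Context: All graphs are finite, simple and undirected. A set $S\subseteq V(G)$ is a dominating set if every vertex not in $S$ is adjacent to some vertex of $S$; $\gamma(G)$ is the minimum size of a dominating set. A set $S$ is a total dominating set if every vertex of $G$ (including those in $S$) is adjacent to some vertex of $S$; $\gamma_t(G)$ is the minimum size of a total dominating set. A set $S$ is a connected dominating set if it is dominating and the subgraph induced by $S$ is connected; $\gamma_c(G)$ is the minimum size of a connected dominating set. *)

theory Defs
  imports Complex_Main
begin

definition simple_graph :: "'a set \<Rightarrow> ('a \<Rightarrow> 'a \<Rightarrow> bool) \<Rightarrow> bool" where
  "simple_graph V E \<longleftrightarrow> finite V \<and> (\<forall>u v. E u v \<longrightarrow> u \<in> V \<and> v \<in> V)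
     \<and> (\<forall>u v. E u v \<longrightarrow> E v u) \<and> (\<forall>v. \<not> E v v)"

definition induced_connected :: "('a \<Rightarrow> 'a \<Rightarrow> bool) \<Rightarrow> 'a set \<Rightarrow> bool" where
  "induced_connected E S \<longleftrightarrow> S \<noteq> {} \<and>
     (\<forall>u\<in>S. \<forall>v\<in>S. (\<lambda>x y. x \<in> S \<and> y \<in> S \<and> E x y)\<^sup>*\<^sup>* u v)"

definition connected_graph :: "'a set \<Rightarrow> ('a \<Rightarrow> 'a \<Rightarrow> bool) \<Rightarrow> bool" where
  "connected_graph V E \<longleftrightarrow> induced_connected E V"

definition no_isolated :: "'a set \<Rightarrow> ('a \<Rightarrow> 'a \<Rightarrow> bool) \<Rightarrow> bool" where
  "no_isolated V E \<longleftrightarrow> (\<forall>v\<in>V. \<exists>u. E v u)"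

definition dominating :: "'a set \<Rightarrow> ('a \<Rightarrow> 'a \<Rightarrow> bool) \<Rightarrow> 'a set \<Rightarrow> bool" where
  "dominating V E S \<longleftrightarrow> S \<subseteq> V \<and> (\<forall>v\<in>V - S. \<exists>u\<in>S. E v u)"

definition total_dominating :: "'a set \<Rightarrow> ('a \<Rightarrow> 'a \<Rightarrow> bool) \<Rightarrow> 'a set \<Rightarrow> bool" where
  "total_dominating V E S \<longleftrightarrow> S \<subseteq> V \<and> (\<forall>v\<in>V. \<exists>u\<in>S. E v u)"

definition connected_dominating :: "'a set \<Rightarrow> ('a \<Rightarrow> 'a \<Rightarrow> bool) \<Rightarrow> 'a set \<Rightarrow> bool" where
  "connected_dominating V E S \<longleftrightarrow> dominating V E S \<and> induced_connected E S"

definition domination_number :: "'a set \<Rightarrow> ('a \<Rightarrow> 'a \<Rightarrow> bool) \<Rightarrow> nat" where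
  "domination_number V E = (LEAST k. \<exists>S. dominating V E S \<and> card S = k)"

definition total_domination_number :: "'a set \<Rightarrow> ('a \<Rightarrow> 'a \<Rightarrow> bool) \<Rightarrow> nat" where
  "total_domination_number V E = (LEAST k. \<exists>S. total_dominating V E S \<and> card S = k)"

definition connected_domination_number :: "'a set \<Rightarrow> ('a \<Rightarrow> 'a \<Rightarrow> bool) \<Rightarrow> nat" where
  "connected_domination_number V E = (LEAST k. \<exists>S. connected_dominating V E S \<and> card S = k)"

end

theory Submission
  imports Defs
begin

text \<open>Adding a neighbour of each vertex of a
  minimum dominating set gives \<open>\<gamma>\<^sub>t \<le> 2\<gamma>\<close>; a minimum connected dominating set with at least two
  vertices is already total, so \<open>\<gamma>\<^sub>t \<le> \<gamma>\<^sub>c\<close> unless \<open>\<gamma>\<^sub>c = 1\<close>. Averaging, \<open>3\<gamma>\<^sub>t \<le> 2(\<gamma> + \<gamma>\<^sub>c)\<close>,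
  and the case \<open>\<gamma> = \<gamma>\<^sub>c = 1\<close> is covered by rounding up. Graphs with a universal vertex, such as
  stars, have \<open>\<gamma> = \<gamma>\<^sub>c = 1\<close> and \<open>\<gamma>\<^sub>t = 2 = \<lceil>4/3\<rceil>\<close>.\<close>

lemma Least_card_le:
  "P S \<Longrightarrow> (LEAST k. \<exists>S. P S \<and> card S = k) \<le> card S"
  by (rule Least_le) blast

lemma Least_card_attained:
  "P S \<Longrightarrow> \<exists>S'. P S' \<and> card S' = (LEAST k. \<exists>S. P S \<and> card S = k)"
  by (rule LeastI_ex) blast

lemma domination_number_le: "dominating V E S \<Longrightarrow> domination_number V E \<le> card S"
  unfolding domination_number_def by (rule Least_card_le)

lemma total_domination_number_le:
  "total_dominating V E S \<Longrightarrow> total_domination_number V E \<le> card S"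
  unfolding total_domination_number_def by (rule Least_card_le)

lemma connected_domination_number_le:
  "connected_dominating V E S \<Longrightarrow> connected_domination_number V E \<le> card S"
  unfolding connected_domination_number_def by (rule Least_card_le)

lemma obtain_minimum_dominating:
  assumes "dominating V E S"
  obtains D where "dominating V E D" "card D = domination_number V E"
  using Least_card_attained[of "dominating V E", OF assms]
  unfolding domination_number_def by blast

lemma obtain_minimum_total_dominating:
  assumes "total_dominating V E S"
  obtains T where "total_dominating V E T" "card T = total_domination_number V E"
  using Least_card_attained[of "total_dominating V E", OF assms]
  unfolding total_domination_number_def by blast

lemma obtain_minimum_connected_dominating:
  assumes "connected_dominating V E S"
  obtains C where "connected_dominating V E C" "card C = connected_domination_number V E"
  using Least_card_attained[of "connected_dominating V E", OF assms]
  unfolding connected_domination_number_def by blast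

lemma simple_graph_finite: "simple_graph V E \<Longrightarrow> finite V"
  unfolding simple_graph_def by blast

lemma simple_graph_edge_in: "simple_graph V E \<Longrightarrow> E u v \<Longrightarrow> u \<in> V \<and> v \<in> V"
  unfolding simple_graph_def by blast

lemma simple_graph_irrefl: "simple_graph V E \<Longrightarrow> \<not> E v v"
  unfolding simple_graph_def by blast

lemma dominating_self: "dominating V E V"
  unfolding dominating_def by simp

lemma connected_dominating_self: "connected_graph V E \<Longrightarrow> connected_dominating V E V"
  unfolding connected_dominating_def connected_graph_def by (simp add: dominating_self)

lemma total_dominating_self:
  "simple_graph V E \<Longrightarrow> no_isolated V E \<Longrightarrow> total_dominating V E V"
  unfolding simple_graph_def no_isolated_def total_dominating_def by blast

lemma domination_number_pos:
  assumes "finite V" "V \<noteq> {}"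
  shows "domination_number V E \<ge> 1"
proof -
  obtain D where D: "dominating V E D" "card D = domination_number V E"
    using obtain_minimum_dominating[OF dominating_self] .
  have "D \<noteq> {}"
    using D(1) \<open>V \<noteq> {}\<close> unfolding dominating_def by auto
  moreover have "finite D"
    using D(1) unfolding dominating_def by (blast intro: rev_finite_subset[OF \<open>finite V\<close>])
  ultimately have "card D > 0" by (simp add: card_gt_0_iff)
  then show ?thesis using D(2) by linarith
qed

lemma total_domination_number_ge_two:
  assumes "simple_graph V E" "no_isolated V E" "V \<noteq> {}"
  shows "total_domination_number V E \<ge> 2"
proof -
  obtain T where T: "total_dominating V E T" "card T = total_domination_number V E"
    using obtain_minimum_total_dominating[OF total_dominating_self[OF assms(1,2)]] .
  have "finite T"
    using T(1) unfolding total_dominating_def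
    by (blast intro: rev_finite_subset[OF simple_graph_finite[OF assms(1)]])
  obtain u where "u \<in> T"
    using T(1) \<open>V \<noteq> {}\<close> unfolding total_dominating_def by blast
  then obtain u' where "u' \<in> T" "E u u'"
    using T(1) unfolding total_dominating_def by blast
  then have "u \<noteq> u'"
    using simple_graph_irrefl[OF assms(1)] by blast
  then have "2 = card {u, u'}" by simp
  also have "\<dots> \<le> card T"
    using \<open>u \<in> T\<close> \<open>u' \<in> T\<close> \<open>finite T\<close> by (intro card_mono) auto
  finally show ?thesis using T(2) by simp
qed

lemma domination_number_le_connected_domination_number:
  assumes "connected_graph V E"
  shows "domination_number V E \<le> connected_domination_number V E"
proof -
  obtain C where "connected_dominating V E C" "card C = connected_domination_number V E"
    using obtain_minimum_connected_dominating[OF connected_dominating_self[OF assms]] .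
  then show ?thesis
    unfolding connected_dominating_def by (metis domination_number_le)
qed

lemma total_domination_number_le_twice_domination_number:
  assumes "simple_graph V E" "no_isolated V E"
  shows "total_domination_number V E \<le> 2 * domination_number V E"
proof -
  obtain D where D: "dominating V E D" "card D = domination_number V E"
    using obtain_minimum_dominating[OF dominating_self] .
  obtain f where f: "\<And>v. v \<in> V \<Longrightarrow> E v (f v)"
    using assms(2) unfolding no_isolated_def by metis
  have "D \<subseteq> V"
    using D(1) unfolding dominating_def by blast
  then have "finite D"
    using rev_finite_subset[OF simple_graph_finite[OF assms(1)]] by blast
  have "total_dominating V E (D \<union> f ` D)"
    using D(1) f simple_graph_edge_in[OF assms(1)] \<open>D \<subseteq> V\<close>
    unfolding total_dominating_def dominating_def by blast
  then have "total_domination_number V E \<le> card (D \<union> f ` D)"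
    by (rule total_domination_number_le)
  also have "\<dots> \<le> card D + card (f ` D)" by (rule card_Un_le)
  also have "\<dots> \<le> 2 * card D" using card_image_le[OF \<open>finite D\<close>, of f] by simp
  finally show ?thesis using D(2) by simp
qed

lemma induced_connected_neighbour:
  assumes "induced_connected E C" "w \<in> C" "u \<in> C" "u \<noteq> w"
  shows "\<exists>x\<in>C. E w x"
proof -
  have "(\<lambda>x y. x \<in> C \<and> y \<in> C \<and> E x y)\<^sup>*\<^sup>* w u"
    using assms(1-3) unfolding induced_connected_def by blast
  then show ?thesis
    using assms(4) by (cases rule: converse_rtranclpE) auto
qed

lemma connected_dominating_imp_total_dominating:
  assumes "connected_dominating V E C" "card C \<ge> 2"
  shows "total_dominating V E C"
  unfolding total_dominating_def
proof (intro conjI ballI)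
  show "C \<subseteq> V"
    using assms(1) unfolding connected_dominating_def dominating_def by blast
next
  fix w assume "w \<in> V"
  show "\<exists>u\<in>C. E w u"
  proof (cases "w \<in> C")
    case True
    have "\<not> C \<subseteq> {w}"
    proof
      assume "C \<subseteq> {w}"
      then have "card C \<le> card {w}" by (intro card_mono) simp_all
      with assms(2) show False by simp
    qed
    then obtain u where "u \<in> C" "u \<noteq> w" by blast
    moreover have "induced_connected E C"
      using assms(1) unfolding connected_dominating_def by simp
    ultimately show ?thesis
      using True by (blast intro: induced_connected_neighbour)
  next
    case False
    then show ?thesis
      using assms(1) \<open>w \<in> V\<close> unfolding connected_dominating_def dominating_def by blast
  qed
qed

lemma total_domination_number_le_connected_domination_number:
  assumes "connected_graph V E" "connected_domination_number V E \<ge> 2"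
  shows "total_domination_number V E \<le> connected_domination_number V E"
proof -
  obtain C where "connected_dominating V E C" "card C = connected_domination_number V E"
    using obtain_minimum_connected_dominating[OF connected_dominating_self[OF assms(1)]] .
  with assms(2) have "total_dominating V E C"
    by (simp add: connected_dominating_imp_total_dominating)
  then show ?thesis
    using \<open>card C = connected_domination_number V E\<close> total_domination_number_le by fastforce
qed

lemma le_ceiling_two_thirds:
  fixes g gc gt :: nat
  assumes "gt \<le> 2 * g" "1 \<le> g" "g \<le> gc" "gc \<ge> 2 \<Longrightarrow> gt \<le> gc"
  shows "int gt \<le> \<lceil>2 * (real g + real gc) / 3\<rceil>"
proof (cases "gc \<ge> 2")
  case True
  have "real gt \<le> 2 * real g" "real gt \<le> real gc"
    using assms(1) assms(4)[OF True] by simp_all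
  then have "3 * real gt \<le> 2 * (real g + real gc)"
    by (simp add: algebra_simps)
  then show ?thesis
    by (simp add: le_ceiling_iff)
next
  case False
  then have "g = 1" "gc = 1" using assms(2,3) by auto
  then show ?thesis using assms(1) by simp
qed

theorem total_domination_number_le_ceiling:
  assumes "simple_graph V E" "connected_graph V E" "no_isolated V E"
  shows "int (total_domination_number V E)
     \<le> \<lceil>2 * (real (domination_number V E) + real (connected_domination_number V E)) / 3\<rceil>"
proof -
  have "V \<noteq> {}"
    using assms(2) unfolding connected_graph_def induced_connected_def by simp
  have "total_domination_number V E \<le> 2 * domination_number V E"
    using assms(1,3) by (rule total_domination_number_le_twice_domination_number)
  moreover have "1 \<le> domination_number V E"
    using simple_graph_finite[OF assms(1)] \<open>V \<noteq> {}\<close> by (rule domination_number_pos)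
  moreover have "domination_number V E \<le> connected_domination_number V E"
    using assms(2) by (rule domination_number_le_connected_domination_number)
  moreover have "connected_domination_number V E \<ge> 2 \<Longrightarrow>
      total_domination_number V E \<le> connected_domination_number V E"
    using assms(2) by (rule total_domination_number_le_connected_domination_number)
  ultimately show ?thesis
    by (rule le_ceiling_two_thirds)
qed

lemma universal_vertex_connected:
  assumes "simple_graph V E" "c \<in> V" "\<forall>v\<in>V - {c}. E v c"
  shows "connected_graph V E"
proof -
  let ?R = "\<lambda>x y. x \<in> V \<and> y \<in> V \<and> E x y"
  have to_c: "?R\<^sup>*\<^sup>* v c" and from_c: "?R\<^sup>*\<^sup>* c v" if "v \<in> V" for v
  proof -
    have "v = c \<or> (?R v c \<and> ?R c v)"
      using assms that unfolding simple_graph_def by blast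
    then show "?R\<^sup>*\<^sup>* v c" "?R\<^sup>*\<^sup>* c v" by auto
  qed
  show ?thesis
    unfolding connected_graph_def induced_connected_def
    using assms(2) by (blast intro: rtranclp_trans to_c from_c)
qed

lemma universal_vertex_no_isolated:
  assumes "simple_graph V E" "c \<in> V" "\<forall>v\<in>V - {c}. E v c" "u \<in> V" "u \<noteq> c"
  shows "no_isolated V E"
  using assms unfolding simple_graph_def no_isolated_def by blast

lemma universal_vertex_domination_numbers:
  assumes "simple_graph V E" "c \<in> V" "\<forall>v\<in>V - {c}. E v c" "u \<in> V" "u \<noteq> c"
  shows "domination_number V E = 1" "connected_domination_number V E = 1"
    "total_domination_number V E = 2"
proof -
  have connected: "connected_graph V E"
    using assms(1-3) by (rule universal_vertex_connected)
  have no_isolated: "no_isolated V E"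
    using assms by (rule universal_vertex_no_isolated)
  have "connected_dominating V E {c}"
    using assms(2,3)
    unfolding connected_dominating_def dominating_def induced_connected_def by auto
  then have "connected_domination_number V E \<le> 1"
    using connected_domination_number_le by fastforce
  moreover have "1 \<le> domination_number V E"
    using simple_graph_finite[OF assms(1)] assms(2) by (intro domination_number_pos) auto
  ultimately show "domination_number V E = 1" "connected_domination_number V E = 1"
    using domination_number_le_connected_domination_number[OF connected] by simp_all
  have "total_dominating V E {c, u}"
    using assms unfolding simple_graph_def total_dominating_def by blast
  then have "total_domination_number V E \<le> 2"
    using total_domination_number_le assms(5) by fastforce
  moreover have "2 \<le> total_domination_number V E"
    using assms(1) no_isolated assms(2) by (intro total_domination_number_ge_two) auto
  ultimately show "total_domination_number V E = 2" by simp
qed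

definition star_edge :: "nat \<Rightarrow> nat \<Rightarrow> nat \<Rightarrow> bool" where
  "star_edge n x y \<longleftrightarrow> x \<le> n \<and> y \<le> n \<and> x \<noteq> y \<and> (x = 0 \<or> y = 0)"

lemma simple_graph_star: "simple_graph {0..n} (star_edge n)"
  unfolding simple_graph_def star_edge_def by auto

lemma star_attains_bound:
  "\<exists>(V :: nat set) E. simple_graph V E \<and> connected_graph V E \<and> no_isolated V E
     \<and> card V \<ge> n \<and>
     int (total_domination_number V E)
       = \<lceil>2 * (real (domination_number V E) + real (connected_domination_number V E)) / 3\<rceil>"
proof (intro exI conjI)
  let ?V = "{0..Suc n}" and ?E = "star_edge (Suc n)"
  have universal: "0 \<in> ?V" "\<forall>v\<in>?V - {0}. ?E v 0" and other: "1 \<in> ?V" "1 \<noteq> (0::nat)"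
    unfolding star_edge_def by auto
  show "simple_graph ?V ?E" by (rule simple_graph_star)
  show "connected_graph ?V ?E"
    using simple_graph_star universal by (rule universal_vertex_connected)
  show "no_isolated ?V ?E"
    using simple_graph_star universal other by (rule universal_vertex_no_isolated)
  show "card ?V \<ge> n" by simp
  show "int (total_domination_number ?V ?E)
     = \<lceil>2 * (real (domination_number ?V ?E) + real (connected_domination_number ?V ?E)) / 3\<rceil>"
    using universal_vertex_domination_numbers[OF simple_graph_star universal other] by simp
qed

theorem theorem2p3:
  shows "(\<forall>(V :: 'a set) E. simple_graph V E \<and> connected_graph V E \<and> no_isolated V E \<longrightarrow>
            int (total_domination_number V E)
              \<le> \<lceil>2 * (real (domination_number V E) + real (connected_domination_number V E)) / 3\<rceil>)
       \<and> (\<forall>n. \<exists>(V :: nat set) E. simple_graph V E \<and> connected_graph V E \<and> no_isolated V E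
            \<and> card V \<ge> n \<and>
            int (total_domination_number V E)
              = \<lceil>2 * (real (domination_number V E) + real (connected_domination_number V E)) / 3\<rceil>)"
  using total_domination_number_le_ceiling star_attains_bound by blast

end
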